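(* Let $n=2^k$ and let $G$ be a random graph drawn from $\mathcal G(n,\tfrac12)$ on vertex set $\{0,1\}^k$. Then with probability tending to $1$ as $n\to\infty$, the following property P holds: for every $U\subseteq V(G)$ with $|U|\le \tfrac13 k$ and every pattern $p$ with $|p|\le\tfrac13 k$, there is at least one vertex in $N(U)$ consistent with $p$.
   Context: $\mathcal G(n,\tfrac12)$: each pair of vertices is an edge independently with probability $1/2$. Vertices are identified with binary strings $v=v_1\cdots v_k$. A pattern is a string $p=p_1\cdots p_k\in\{*,0,1\}^k$; $p$ is consistent with vertex $v$ if for every $i$, $p_i=v_i$ or $p_i=*$; $|p|$ is the number of positions with $p_i\in\{0,1\}$. For $v\in V(G)$, $N(v)=\{u:\{u,v\}\in E(G)\}$, and for $U\subseteq V(G)$, $N(U)=\bigcap_{v\in U}N(v)$ (the common neighbours of all vertices of $U$; for $U=\emptyset$ this is $V(G)$). *)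

theory Defs
  imports "HOL-Probability.Probability"
begin

definition cube :: "nat \<Rightarrow> bool list set" where
  "cube k = {v. length v = k}"

definition all_edges :: "nat \<Rightarrow> bool list set set" where
  "all_edges k = {{u, v} | u v. u \<in> cube k \<and> v \<in> cube k \<and> u \<noteq> v}"

text \<open>G(n,1/2) on vertex set {0,1}^k: the uniform distribution on all edge sets
  (each possible edge present independently with probability 1/2).\<close>
definition Gnhalf :: "nat \<Rightarrow> bool list set set pmf" where
  "Gnhalf k = pmf_of_set (Pow (all_edges k))"

text \<open>Common neighbourhood N(U) of a vertex set U in graph with edge set E
  (equals the whole vertex set if U is empty).\<close>
definition common_nbhd :: "nat \<Rightarrow> bool list set set \<Rightarrow> bool list set \<Rightarrow> bool list set" where
  "common_nbhd k E U = {w \<in> cube k. \<forall>u\<in>U. {u, w} \<in> E}"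

text \<open>Patterns in {*,0,1}^k: None = *, Some b = fixed bit b.\<close>
definition consistent :: "bool option list \<Rightarrow> bool list \<Rightarrow> bool" where
  "consistent p v \<longleftrightarrow> (\<forall>i < length p. p ! i = None \<or> p ! i = Some (v ! i))"

definition pat_size :: "bool option list \<Rightarrow> nat" where
  "pat_size p = card {i. i < length p \<and> p ! i \<noteq> None}"

definition propP :: "nat \<Rightarrow> bool list set set \<Rightarrow> bool" where
  "propP k E \<longleftrightarrow>
     (\<forall>U \<subseteq> cube k. real (card U) \<le> real k / 3 \<longrightarrow>
       (\<forall>p. length p = k \<longrightarrow> real (pat_size p) \<le> real k / 3 \<longrightarrow>
          (\<exists>w \<in> common_nbhd k E U. consistent p w)))"

end

theory Submission
  imports Defs "HOL-Real_Asymp.Real_Asymp"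
begin

text \<open>
  Fix \<open>U\<close> and \<open>p\<close> with \<open>|U|, |p| \<le> k/3\<close>. At least \<open>2^(k - |p|) - |U| \<ge> 2^(2k/3) - k\<close> vertices
  \<open>w \<notin> U\<close> are consistent with \<open>p\<close>, and the events "\<open>w\<close> is adjacent to all of \<open>U\<close>" are
  independent for distinct such \<open>w\<close> (they concern disjoint sets of edges), each of probability
  \<open>2^-|U| \<ge> 2^(-k/3)\<close>. Hence \<open>N(U)\<close> misses all of them with probability at most
  \<open>(1 - 2^(-k/3))^(2^(2k/3) - k) \<le> exp (k - 2^(k/3))\<close>. A union bound over the at most
  \<open>(k+1) 2^(k\<^sup>2) 3^k\<close> pairs \<open>(U, p)\<close> leaves a failure probability that still tends to 0.
\<close>

subsection \<open>Independent fair coins\<close>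

lemma prob_pair_pmf_Times:
  "measure_pmf.prob (pair_pmf M N) (X \<times> Y) = measure_pmf.prob M X * measure_pmf.prob N Y"
proof -
  have "measure_pmf.prob M X * measure_pmf.prob N Y =
        measure_pmf.prob M (X \<inter> set_pmf M) * measure_pmf.prob N (Y \<inter> set_pmf N)"
    by (simp add: measure_Int_set_pmf)
  also have "\<dots> = measure_pmf.prob (pair_pmf M N) ((X \<inter> set_pmf M) \<times> (Y \<inter> set_pmf N))"
    by (rule measure_pmf_prob_product[symmetric]) (auto intro: countable_Int2)
  also have "(X \<inter> set_pmf M) \<times> (Y \<inter> set_pmf N) = (X \<times> Y) \<inter> set_pmf (pair_pmf M N)"
    by auto
  finally show ?thesis
    by (simp only: measure_Int_set_pmf)
qed

lemma prob_Pi_pmf_half_not_all: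
  assumes "finite A"
  shows "measure_pmf.prob (Pi_pmf A dflt (\<lambda>_. bernoulli_pmf (1/2))) {f. \<exists>x\<in>A. \<not> f x}
         = 1 - (1/2::real) ^ card A"
proof -
  have "{f. \<exists>x\<in>A. \<not> f x} = UNIV - Pi A (\<lambda>_. {True})"
    by (auto simp: Pi_def)
  then show ?thesis
    using assms measure_pmf.prob_compl[of "Pi A (\<lambda>_. {True})"]
    by (simp add: measure_Pi_pmf_Pi measure_pmf_single)
qed

lemma prob_Pi_pmf_half_disjoint_blocks:
  fixes S :: "'w \<Rightarrow> 'a set"
  assumes "finite W" "\<And>w. w \<in> W \<Longrightarrow> finite (S w)" "disjoint_family_on S W"
  shows "measure_pmf.prob (Pi_pmf (\<Union>w\<in>W. S w) dflt (\<lambda>_. bernoulli_pmf (1/2)))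
           {f. \<forall>w\<in>W. \<exists>x\<in>S w. \<not> f x} = (\<Prod>w\<in>W. 1 - (1/2::real) ^ card (S w))"
  using assms
proof (induction W rule: finite_induct)
  case empty
  then show ?case by simp
next
  case (insert w W)
  let ?q = "\<lambda>_::'a. bernoulli_pmf (1/2)"
  let ?A = "S w"
  let ?B = "\<Union>v\<in>W. S v"
  let ?h = "\<lambda>(f, g) x. if x \<in> ?A then f x else g x"
  have disj: "disjoint_family_on S W"
    using insert.prems(2) by (rule disjoint_family_on_mono[rotated]) auto
  have AB: "?A \<inter> S v = {}" if "v \<in> W" for v
    using insert.prems(2) insert.hyps(2) that unfolding disjoint_family_on_def by (metis insertCI)
  have fin: "finite ?A" "finite ?B"
    using insert.prems(1) insert.hyps(1) by auto
  have split: "Pi_pmf (\<Union>v\<in>insert w W. S v) dflt ?q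
      = map_pmf ?h (pair_pmf (Pi_pmf ?A dflt ?q) (Pi_pmf ?B dflt ?q))"
    using Pi_pmf_union[OF fin, of dflt ?q] AB by (simp add: Int_UN_distrib)
  have pre: "?h -` {f. \<forall>v\<in>insert w W. \<exists>x\<in>S v. \<not> f x}
      = {f. \<exists>x\<in>?A. \<not> f x} \<times> {g. \<forall>v\<in>W. \<exists>x\<in>S v. \<not> g x}"
  proof (rule set_eqI, clarify)
    fix f g :: "'a \<Rightarrow> bool"
    have "(\<exists>x\<in>S v. \<not> ?h (f, g) x) \<longleftrightarrow> (\<exists>x\<in>S v. \<not> g x)" if "v \<in> W" for v
      using AB[OF that] by auto
    then show "(f, g) \<in> ?h -` {f. \<forall>v\<in>insert w W. \<exists>x\<in>S v. \<not> f x}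
        \<longleftrightarrow> (f, g) \<in> {f. \<exists>x\<in>?A. \<not> f x} \<times> {g. \<forall>v\<in>W. \<exists>x\<in>S v. \<not> g x}"
      by simp
  qed
  have "\<And>v. v \<in> W \<Longrightarrow> finite (S v)"
    using insert.prems(1) by simp
  note IH = insert.IH[OF this disj]
  show ?case
    by (simp only: split measure_map_pmf pre prob_pair_pmf_Times prob_Pi_pmf_half_not_all[OF fin(1)]
        IH prod.insert[OF insert.hyps(1,2)])
qed

lemma prob_Pow_contains_no_block:
  fixes S :: "'w \<Rightarrow> 'a set"
  assumes "finite A" "finite W" "\<And>w. w \<in> W \<Longrightarrow> S w \<subseteq> A" "disjoint_family_on S W"
  shows "measure_pmf.prob (pmf_of_set (Pow A)) {E. \<forall>w\<in>W. \<not> S w \<subseteq> E}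
         = (\<Prod>w\<in>W. 1 - (1/2::real) ^ card (S w))"
proof -
  let ?q = "\<lambda>_::'a. bernoulli_pmf (1/2)"
  define D where "D = (\<Union>w\<in>W. S w)"
  have "D \<subseteq> A"
    using assms(3) by (auto simp: D_def)
  have "(\<lambda>b. {x \<in> A. b x}) -` {E. \<forall>w\<in>W. \<not> S w \<subseteq> E} = {f. \<forall>w\<in>W. \<exists>x\<in>S w. \<not> f x}"
    using assms(3) by (auto simp: subset_iff)
  then have "measure_pmf.prob (pmf_of_set (Pow A)) {E. \<forall>w\<in>W. \<not> S w \<subseteq> E}
      = measure_pmf.prob (Pi_pmf A False ?q) {f. \<forall>w\<in>W. \<exists>x\<in>S w. \<not> f x}"
    by (simp only: pmf_of_set_Pow_conv_bernoulli[OF assms(1), of False, symmetric] measure_map_pmf)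
  also have "\<dots> = measure_pmf.prob (Pi_pmf D False ?q) {f. \<forall>w\<in>W. \<exists>x\<in>S w. \<not> f x}"
  proof -
    have "(\<lambda>f x. if x \<in> D then f x else False) -` {f. \<forall>w\<in>W. \<exists>x\<in>S w. \<not> f x}
        = {f. \<forall>w\<in>W. \<exists>x\<in>S w. \<not> f x}"
      by (auto simp: D_def)
    then show ?thesis
      by (simp only: Pi_pmf_subset[OF assms(1) \<open>D \<subseteq> A\<close>, of False ?q] measure_map_pmf)
  qed
  also have "\<dots> = (\<Prod>w\<in>W. 1 - (1/2::real) ^ card (S w))"
    unfolding D_def
    using assms by (intro prob_Pi_pmf_half_disjoint_blocks) (auto intro: finite_subset)
  finally show ?thesis .
qed

lemma cube_eq_lists: "cube k = {xs. set xs \<subseteq> UNIV \<and> length xs = k}"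
  by (auto simp: cube_def)

lemma finite_cube: "finite (cube k)"
  unfolding cube_eq_lists by (rule finite_lists_length_eq) simp

lemma card_cube: "card (cube k) = 2 ^ k"
  unfolding cube_eq_lists by (subst card_lists_length_eq) simp_all

lemma finite_all_edges: "finite (all_edges k)"
proof -
  have "all_edges k \<subseteq> Pow (cube k)"
    by (auto simp: all_edges_def)
  then show ?thesis
    using finite_cube by (meson finite_Pow_iff finite_subset)
qed

lemma card_patterns: "card {p :: bool option list. set p \<subseteq> UNIV \<and> length p = k} = 3 ^ k"
  by (subst card_lists_length_eq) (simp_all add: UNIV_option_conv card_image)

lemma card_consistent_ge:
  assumes "length p = k"
  shows "2 ^ (k - pat_size p) \<le> card {w \<in> cube k. consistent p w}"
proof -
  define F where "F = {i. i < k \<and> p ! i = None}"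
  define fill where "fill T = map (\<lambda>i. case p ! i of None \<Rightarrow> i \<in> T | Some b \<Rightarrow> b) [0..<k]" for T
  have fill_nth: "fill T ! i = (i \<in> T)" if "i \<in> F" for T i
    using that by (simp add: F_def fill_def)
  have "inj_on fill (Pow F)"
  proof (rule inj_onI, rule set_eqI)
    fix T1 T2 i
    assume "T1 \<in> Pow F" "T2 \<in> Pow F" "fill T1 = fill T2"
    then show "i \<in> T1 \<longleftrightarrow> i \<in> T2"
      by (cases "i \<in> F") (auto simp flip: fill_nth)
  qed
  moreover have "fill ` Pow F \<subseteq> {w \<in> cube k. consistent p w}"
  proof -
    have "p ! i = None \<or> p ! i = Some (fill T ! i)" if "i < k" for T i
      using that by (cases "p ! i") (auto simp: fill_def)
    moreover have "length (fill T) = k" for T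
      by (simp add: fill_def)
    ultimately show ?thesis
      using assms by (auto simp: cube_def consistent_def)
  qed
  moreover have "card F + pat_size p = k"
  proof -
    have "{..<k} = F \<union> {i. i < length p \<and> p ! i \<noteq> None}"
      "F \<inter> {i. i < length p \<and> p ! i \<noteq> None} = {}"
      using assms by (auto simp: F_def)
    then show ?thesis
      unfolding pat_size_def by (metis card_Un_disjoint card_lessThan finite_Un finite_lessThan)
  qed
  moreover have "finite F"
    by (simp add: F_def)
  ultimately have "2 ^ (k - pat_size p) = card (fill ` Pow F)"
    by (simp add: card_image card_Pow)
  also have "\<dots> \<le> card {w \<in> cube k. consistent p w}"
    using \<open>fill ` Pow F \<subseteq> _\<close> finite_cube by (intro card_mono) auto
  finally show ?thesis .
qed

subsection \<open>One pair \<open>(U, p)\<close>\<close>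

lemma prob_no_consistent_common_nbhd_le:
  assumes "U \<subseteq> cube k"
  shows "measure_pmf.prob (Gnhalf k) {E. \<not> (\<exists>w\<in>common_nbhd k E U. consistent p w)}
         \<le> (1 - (1/2::real) ^ card U) ^ card {w \<in> cube k. consistent p w \<and> w \<notin> U}"
proof -
  define W where "W = {w \<in> cube k. consistent p w \<and> w \<notin> U}"
  define S where "S w = (\<lambda>u. {u, w}) ` U" for w
  have S_edges: "S w \<subseteq> all_edges k" if "w \<in> W" for w
    using that assms by (auto simp: S_def W_def all_edges_def)
  have "disjoint_family_on S W"
    by (auto simp: disjoint_family_on_def S_def W_def doubleton_eq_iff)
  have card_S: "card (S w) = card U" for w
    unfolding S_def by (rule card_image) (auto simp: inj_on_def doubleton_eq_iff)
  have "{E. \<not> (\<exists>w\<in>common_nbhd k E U. consistent p w)} \<subseteq> {E. \<forall>w\<in>W. \<not> S w \<subseteq> E}"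
    by (auto simp: common_nbhd_def S_def W_def)
  then have "measure_pmf.prob (Gnhalf k) {E. \<not> (\<exists>w\<in>common_nbhd k E U. consistent p w)}
      \<le> measure_pmf.prob (Gnhalf k) {E. \<forall>w\<in>W. \<not> S w \<subseteq> E}"
    by (rule measure_pmf.finite_measure_mono) simp
  also have "\<dots> = (\<Prod>w\<in>W. 1 - (1/2::real) ^ card (S w))"
    unfolding Gnhalf_def
    using finite_all_edges S_edges \<open>disjoint_family_on S W\<close> finite_cube
    by (intro prob_Pow_contains_no_block) (auto simp: W_def)
  finally show ?thesis
    by (simp add: card_S W_def)
qed

lemma one_minus_pow_pow_le_exp:
  fixes c s n k :: nat
  assumes c: "real c \<le> real k / 3" and s: "real s \<le> real k / 3"
    and n: "real n \<ge> 2 ^ (k - s) - real c"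
  shows "(1 - (1/2::real) ^ c) ^ n \<le> exp (real k - 2 powr (real k / 3))"
proof -
  define a where "a = (1/2::real) ^ c"
  define b where "b = 2 powr (- (real k / 3))"
  have "0 \<le> a" "a \<le> 1"
    by (simp_all add: a_def power_le_one)
  have "a = 2 powr (- real c)"
    by (simp add: a_def powr_minus powr_realpow power_one_over inverse_eq_divide)
  then have "b \<le> a"
    unfolding b_def using c by (simp add: powr_mono)
  have "0 < b" "b \<le> 1"
    unfolding b_def using powr_mono[of "- (real k / 3)" 0 "2::real"] by auto
  have "(2::real) ^ (k - s) = 2 powr real (k - s)"
    by (simp add: powr_realpow)
  also have "\<dots> \<ge> 2 powr (2 * real k / 3)"
    using s by (intro powr_mono) (auto simp: of_nat_diff)
  finally have "real n \<ge> 2 powr (2 * real k / 3) - real k"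
    using n c by linarith
  then have "b * (2 powr (2 * real k / 3) - real k) \<le> b * real n"
    using \<open>0 < b\<close> by (intro mult_left_mono) auto
  also have "\<dots> \<le> a * real n"
    using \<open>b \<le> a\<close> by (intro mult_right_mono) auto
  finally have "b * (2 powr (2 * real k / 3) - real k) \<le> a * real n" .
  moreover have "b * 2 powr (2 * real k / 3) = 2 powr (real k / 3)"
    unfolding b_def by (simp add: powr_add[symmetric])
  moreover have "b * real k \<le> real k"
    using \<open>0 < b\<close> \<open>b \<le> 1\<close> by (simp add: mult_left_le_one_le)
  ultimately have "real k - 2 powr (real k / 3) \<ge> - a * real n"
    by (simp add: right_diff_distrib)
  have "(1 - a) ^ n \<le> exp (- a) ^ n"
    using exp_ge_add_one_self[of "- a"] \<open>a \<le> 1\<close> by (intro power_mono) auto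
  also have "\<dots> = exp (- a * real n)"
    by (simp add: exp_of_nat_mult[symmetric] mult.commute)
  also have "\<dots> \<le> exp (real k - 2 powr (real k / 3))"
    using \<open>real k - 2 powr (real k / 3) \<ge> - a * real n\<close> by simp
  finally show ?thesis
    by (simp add: a_def)
qed

lemma prob_no_consistent_common_nbhd_le_exp:
  assumes "U \<subseteq> cube k" "real (card U) \<le> real k / 3"
    and "length p = k" "real (pat_size p) \<le> real k / 3"
  shows "measure_pmf.prob (Gnhalf k) {E. \<not> (\<exists>w\<in>common_nbhd k E U. consistent p w)}
         \<le> exp (real k - 2 powr (real k / 3))"
proof -
  define C where "C = {w \<in> cube k. consistent p w}"
  have "finite U"
    using assms(1) finite_cube finite_subset by blast
  have "(2::real) ^ (k - pat_size p) \<le> real (card C)"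
    unfolding C_def using card_consistent_ge[OF assms(3)] by (metis of_nat_le_iff of_nat_numeral of_nat_power)
  moreover have "real (card C) - real (card U) \<le> real (card (C - U))"
    using diff_card_le_card_Diff[OF \<open>finite U\<close>, of C] by linarith
  ultimately have "(1 - (1/2::real) ^ card U) ^ card (C - U) \<le> exp (real k - 2 powr (real k / 3))"
    using assms by (intro one_minus_pow_pow_le_exp[where s = "pat_size p"]) linarith+
  moreover have "{w \<in> cube k. consistent p w \<and> w \<notin> U} = C - U"
    by (auto simp: C_def)
  ultimately show ?thesis
    using prob_no_consistent_common_nbhd_le[OF assms(1), of p] by simp
qed

subsection \<open>Union bound\<close>

lemma card_subsets_card_le:
  assumes "finite A"
  shows "card {B. B \<subseteq> A \<and> card B \<le> m} \<le> (\<Sum>i\<le>m. card A ^ i)"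
proof -
  define L where "L = {xs. set xs \<subseteq> A \<and> length xs \<le> m}"
  have "{B. B \<subseteq> A \<and> card B \<le> m} \<subseteq> set ` L"
  proof
    fix B
    assume B: "B \<in> {B. B \<subseteq> A \<and> card B \<le> m}"
    then obtain xs where "set xs = B" "distinct xs"
      using assms finite_distinct_list finite_subset by (metis mem_Collect_eq)
    then show "B \<in> set ` L"
      using B distinct_card unfolding L_def by fastforce
  qed
  moreover have "finite L"
    unfolding L_def using assms by (rule finite_lists_length_le)
  ultimately have "card {B. B \<subseteq> A \<and> card B \<le> m} \<le> card L"
    by (meson card_image_le card_mono finite_imageI order_trans)
  also have "\<dots> = (\<Sum>i\<le>m. card A ^ i)"
    unfolding L_def using assms by (rule card_lists_length_le)
  finally show ?thesis .
qed

lemma card_small_subsets_cube_le: "card {U. U \<subseteq> cube k \<and> card U \<le> k} \<le> (k + 1) * 2 ^ (k * k)"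
proof -
  have "card {U. U \<subseteq> cube k \<and> card U \<le> k} \<le> (\<Sum>i\<le>k. (2 ^ k) ^ i)"
    using card_subsets_card_le[OF finite_cube] by (simp add: card_cube)
  also have "\<dots> \<le> (\<Sum>i\<le>k. (2::nat) ^ (k * k))"
    by (intro sum_mono) (simp add: power_mult[symmetric])
  finally show ?thesis
    by simp
qed

lemma prob_not_propP_le:
  "measure_pmf.prob (Gnhalf k) {E. \<not> propP k E}
     \<le> real (k + 1) * 2 ^ (k * k) * 3 ^ k * exp (real k - 2 powr (real k / 3))"
proof -
  define I where "I = {(U, p). U \<subseteq> cube k \<and> real (card U) \<le> real k / 3
                              \<and> length p = k \<and> real (pat_size p) \<le> real k / 3}"
  define Bad where "Bad = (\<lambda>(U, p). {E. \<not> (\<exists>w\<in>common_nbhd k E U. consistent p w)})"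
  define Us where "Us = {U. U \<subseteq> cube k \<and> card U \<le> k}"
  define Ps where "Ps = {p :: bool option list. set p \<subseteq> UNIV \<and> length p = k}"
  have "I \<subseteq> Us \<times> Ps"
    by (auto simp: I_def Us_def Ps_def)
  moreover have "finite Us"
    unfolding Us_def using finite_cube by simp
  moreover have "finite Ps"
    unfolding Ps_def by (rule finite_lists_length_eq) simp
  ultimately have "finite I"
    by (meson finite_SigmaI finite_subset)
  have "card I \<le> card Us * card Ps"
    using \<open>I \<subseteq> Us \<times> Ps\<close> \<open>finite Us\<close> \<open>finite Ps\<close> by (metis card_cartesian_product card_mono finite_SigmaI)
  also have "\<dots> \<le> (k + 1) * 2 ^ (k * k) * 3 ^ k"
    unfolding Ps_def card_patterns Us_def using card_small_subsets_cube_le by simp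
  finally have card_I: "card I \<le> (k + 1) * 2 ^ (k * k) * 3 ^ k" .
  have "{E. \<not> propP k E} \<subseteq> (\<Union>i\<in>I. Bad i)"
    unfolding propP_def I_def Bad_def by blast
  then have "measure_pmf.prob (Gnhalf k) {E. \<not> propP k E} \<le> measure_pmf.prob (Gnhalf k) (\<Union>i\<in>I. Bad i)"
    by (rule measure_pmf.finite_measure_mono) simp
  also have "\<dots> \<le> (\<Sum>i\<in>I. measure_pmf.prob (Gnhalf k) (Bad i))"
    using \<open>finite I\<close> by (rule measure_pmf.finite_measure_subadditive_finite) auto
  also have "\<dots> \<le> (\<Sum>i\<in>I. exp (real k - 2 powr (real k / 3)))"
    using prob_no_consistent_common_nbhd_le_exp by (intro sum_mono) (auto simp: I_def Bad_def)
  also have "\<dots> = real (card I) * exp (real k - 2 powr (real k / 3))"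
    by simp
  also have "\<dots> \<le> real (k + 1) * 2 ^ (k * k) * 3 ^ k * exp (real k - 2 powr (real k / 3))"
    using of_nat_mono[OF card_I, where 'a = real] by (intro mult_right_mono) (simp_all add: algebra_simps)
  finally show ?thesis .
qed

theorem mainTheorem5:
  shows "(\<lambda>k. measure_pmf.prob (Gnhalf k) {E. propP k E}) \<longlonglongrightarrow> 1"
proof -
  let ?bad = "\<lambda>k. measure_pmf.prob (Gnhalf k) {E. \<not> propP k E}"
  have "(\<lambda>k. real (k + 1) * 2 ^ (k * k) * 3 ^ k * exp (real k - 2 powr (real k / 3)))
          \<longlonglongrightarrow> 0"
    by real_asymp
  then have "?bad \<longlonglongrightarrow> 0"
    by (rule Lim_null_comparison[rotated]) (use prob_not_propP_le in \<open>auto intro!: always_eventually\<close>)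
  then have "(\<lambda>k. 1 - ?bad k) \<longlonglongrightarrow> 1"
    using tendsto_diff[OF tendsto_const, of ?bad 0 sequentially 1] by simp
  moreover have "measure_pmf.prob (Gnhalf k) {E. propP k E} = 1 - ?bad k" for k
  proof -
    have "{E. propP k E} = UNIV - {E. \<not> propP k E}"
      by auto
    then show ?thesis
      using measure_pmf.prob_compl[of "{E. \<not> propP k E}" "Gnhalf k"] by simp
  qed
  ultimately show ?thesis
    by simp
qed

end
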